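(* Let $v\ge4$ be an integer with $v\not\equiv2\pmod 4$. Then an optimum $(d,2)$-CDA$((d+1)v^2;5,v)$ exists for every positive integer $d$ with $d+1\le v$.
   Context: Consecutive $t$-way interaction in an $N\times k$ array $A=(a_{ij})$ over a $v$-set $V$: $T=\{(i,x_i),\dots,(i+t-1,x_{i+t-1})\}$, $1\le i\le k-t+1$, $x_r\in V$; $\rho(A,T)=\{r: a_{r,j}=x_j\ \forall (j,x_j)\in T\}$, $\rho(A,\mathcal T)=\bigcup_{T\in\mathcal T}\rho(A,T)$. A $(d,t)$-CDA$(N;k,v)$ is an $N\times k$ array over $V$ in which every $t$ consecutive columns contain every $t$-tuple at least once, and such that for every set $\mathcal T$ of exactly $d$ distinct consecutive $t$-way interactions and every consecutive $t$-way interaction $T$: $\rho(A,T)\subseteq\rho(A,\mathcal T)$ iff $T\in\mathcal T$. It is optimum if $N=(d+1)v^t$. *)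

theory Defs
  imports Main
begin

(* An N x k array over the v-set V = {0..<v}: rows 0..<N, columns 0..<k (0-indexed),
   represented as a function A :: nat => nat => nat; entry A r c. *)

definition is_array :: "(nat \<Rightarrow> nat \<Rightarrow> nat) \<Rightarrow> nat \<Rightarrow> nat \<Rightarrow> nat \<Rightarrow> bool" where
  "is_array A N k v \<longleftrightarrow> (\<forall>r<N. \<forall>c<k. A r c < v)"

(* A consecutive t-way interaction {(i,x_0),...,(i+t-1,x_{t-1})} is encoded as the pair (i, xs)
   with start column i (0-indexed, i + t \<le> k) and xs a list of t symbols from V. *)
definition cons_interactions :: "nat \<Rightarrow> nat \<Rightarrow> nat \<Rightarrow> (nat \<times> nat list) set" where
  "cons_interactions k t v =
     {(i, xs). i + t \<le> k \<and> length xs = t \<and> set xs \<subseteq> {0..<v}}"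

definition rho :: "(nat \<Rightarrow> nat \<Rightarrow> nat) \<Rightarrow> nat \<Rightarrow> nat \<times> nat list \<Rightarrow> nat set" where
  "rho A N T = {r. r < N \<and> (\<forall>j<length (snd T). A r (fst T + j) = snd T ! j)}"

definition rho_set :: "(nat \<Rightarrow> nat \<Rightarrow> nat) \<Rightarrow> nat \<Rightarrow> (nat \<times> nat list) set \<Rightarrow> nat set" where
  "rho_set A N TT = (\<Union>T\<in>TT. rho A N T)"

definition is_CDA :: "nat \<Rightarrow> nat \<Rightarrow> (nat \<Rightarrow> nat \<Rightarrow> nat) \<Rightarrow> nat \<Rightarrow> nat \<Rightarrow> nat \<Rightarrow> bool" where
  "is_CDA d t A N k v \<longleftrightarrow>
     is_array A N k v \<and>
     (\<forall>T\<in>cons_interactions k t v. rho A N T \<noteq> {}) \<and>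
     (\<forall>TT. TT \<subseteq> cons_interactions k t v \<longrightarrow> card TT = d \<longrightarrow>
        (\<forall>T\<in>cons_interactions k t v. rho A N T \<subseteq> rho_set A N TT \<longleftrightarrow> T \<in> TT))"

definition is_optimum_CDA :: "nat \<Rightarrow> nat \<Rightarrow> (nat \<Rightarrow> nat \<Rightarrow> nat) \<Rightarrow> nat \<Rightarrow> nat \<Rightarrow> nat \<Rightarrow> bool" where
  "is_optimum_CDA d t A N k v \<longleftrightarrow> is_CDA d t A N k v \<and> N = (d + 1) * v ^ t"

end

theory Submission
  imports Defs "HOL-Number_Theory.Cong"
begin

text \<open>
  Index the \<open>(d + 1) v\<^sup>2\<close> rows by triples \<open>(s, x, y)\<close> with \<open>s \<le> d\<close> and \<open>x, y \<in> \<int>\<^sub>v\<close>, and let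
  row \<open>(s, x, y)\<close> read \<open>(x, y, s + x, s + y, x)\<close>. Within a layer \<open>s\<close> every pair of adjacent
  columns is a bijective image of \<open>(x, y)\<close>, so each interaction is covered once in every layer,
  i.e. by \<open>d + 1\<close> rows. Adjacent pairs at two different positions together show one coordinate
  with its shift by \<open>s\<close>, plus one more value for the other coordinate; as \<open>s < v\<close> this determines
  \<open>(s, x, y)\<close>, so distinct interactions share at most one row. Hence \<open>d\<close> interactions other
  than \<open>T\<close> cover at most \<open>d\<close> of the rows of \<open>T\<close>.
\<close>

lemma rho_subset_rho_set_iff_mem:
  assumes covered: "\<forall>T\<in>C. d + 1 \<le> card (rho A N T)"
    and overlap: "\<forall>T\<in>C. \<forall>T'\<in>C. T \<noteq> T' \<longrightarrow> card (rho A N T \<inter> rho A N T') \<le> 1"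
    and TT: "TT \<subseteq> C" "finite TT" "card TT = d" and T: "T \<in> C"
  shows "rho A N T \<subseteq> rho_set A N TT \<longleftrightarrow> T \<in> TT"
proof
  assume "T \<in> TT"
  then show "rho A N T \<subseteq> rho_set A N TT" unfolding rho_set_def by auto
next
  assume sub: "rho A N T \<subseteq> rho_set A N TT"
  show "T \<in> TT"
  proof (rule ccontr)
    assume "T \<notin> TT"
    have "card (rho A N T) = card (\<Union>T'\<in>TT. rho A N T \<inter> rho A N T')"
      using sub unfolding rho_set_def by (intro arg_cong[where f = card]) auto
    also have "\<dots> \<le> (\<Sum>T'\<in>TT. card (rho A N T \<inter> rho A N T'))"
      by (rule card_UN_le[OF \<open>finite TT\<close>])
    also have "\<dots> \<le> (\<Sum>T'\<in>TT. 1)"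
    proof (rule sum_mono)
      fix T' assume "T' \<in> TT"
      then have "T' \<in> C" "T \<noteq> T'" using TT(1) \<open>T \<notin> TT\<close> by auto
      then show "card (rho A N T \<inter> rho A N T') \<le> 1" using overlap T by simp
    qed
    also have "\<dots> = d" using TT(3) by simp
    finally show False using covered T by fastforce
  qed
qed

lemma cons_interactions_2:
  "cons_interactions k 2 v = {(i, [a, b]) | i a b. i + 2 \<le> k \<and> a < v \<and> b < v}"
  unfolding cons_interactions_def by (auto simp: length_Suc_conv numeral_2_eq_2)

lemma finite_cons_interactions: "finite (cons_interactions k t v)"
proof (rule finite_subset)
  show "cons_interactions k t v \<subseteq> {..k} \<times> {xs. set xs \<subseteq> {0..<v} \<and> length xs = t}"
    unfolding cons_interactions_def by auto
  show "finite ({..k} \<times> {xs. set xs \<subseteq> {0..<v} \<and> length xs = t})"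
    by (intro finite_cartesian_product finite_atMost finite_lists_length_eq finite_atLeastLessThan)
qed

lemma finite_rho: "finite (rho A N T)"
  by (rule finite_subset[of _ "{..<N}"]) (auto simp: rho_def)

lemma rho_pair: "rho A N (i, [a, b]) = {r. r < N \<and> A r i = a \<and> A r (Suc i) = b}"
  unfolding rho_def by (auto simp: less_Suc_eq)

definition row_index :: "nat \<Rightarrow> nat \<Rightarrow> nat \<Rightarrow> nat \<Rightarrow> nat" where
  "row_index v s x y = (s * v + x) * v + y"

definition layer :: "nat \<Rightarrow> nat \<Rightarrow> nat" where
  "layer v r = r div v\<^sup>2"

definition xcoord :: "nat \<Rightarrow> nat \<Rightarrow> nat" where
  "xcoord v r = r div v mod v"

definition ycoord :: "nat \<Rightarrow> nat \<Rightarrow> nat" where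
  "ycoord v r = r mod v"

lemma row_index_coords: "row_index v (layer v r) (xcoord v r) (ycoord v r) = r"
  unfolding row_index_def layer_def xcoord_def ycoord_def
  by (metis div_mult2_eq div_mult_mod_eq power2_eq_square)

lemma coords_row_index:
  assumes "x < v" "y < v"
  shows "layer v (row_index v s x y) = s" "xcoord v (row_index v s x y) = x"
    "ycoord v (row_index v s x y) = y"
proof -
  have div_v: "row_index v s x y div v = s * v + x"
    unfolding row_index_def using assms by simp
  then show "xcoord v (row_index v s x y) = x"
    unfolding xcoord_def using assms by simp
  have "row_index v s x y div v\<^sup>2 = (s * v + x) div v"
    by (simp add: power2_eq_square div_mult2_eq flip: div_v)
  then show "layer v (row_index v s x y) = s"
    unfolding layer_def using assms by simp
  show "ycoord v (row_index v s x y) = y"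
    unfolding ycoord_def row_index_def using assms by simp
qed

lemma row_index_less:
  assumes "s < n" "x < v" "y < v"
  shows "row_index v s x y < n * v\<^sup>2"
proof -
  have "row_index v s x y < (s * v + x + 1) * v"
    unfolding row_index_def using assms by simp
  also have "\<dots> \<le> (s * v + v) * v" using assms by (intro mult_le_mono1) simp
  also have "\<dots> = (s + 1) * v\<^sup>2" by (simp add: power2_eq_square algebra_simps)
  also have "\<dots> \<le> n * v\<^sup>2" using assms by (intro mult_le_mono1) simp
  finally show ?thesis .
qed

lemma coords_less:
  assumes "0 < v" "r < n * v\<^sup>2"
  shows "layer v r < n" "xcoord v r < v" "ycoord v r < v"
  using assms unfolding layer_def xcoord_def ycoord_def
  by (auto simp: less_mult_imp_div_less)

definition cyclic_row :: "nat \<Rightarrow> nat \<Rightarrow> nat \<Rightarrow> nat \<Rightarrow> nat list" where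
  "cyclic_row v s x y = [x, y, (s + x) mod v, (s + y) mod v, x]"

definition cyclic_array :: "nat \<Rightarrow> nat \<Rightarrow> nat \<Rightarrow> nat" where
  "cyclic_array v r c = cyclic_row v (layer v r) (xcoord v r) (ycoord v r) ! c"

lemma add_mod_eq_sub: "s < v \<Longrightarrow> b < v \<Longrightarrow> (s + (b + v - s) mod v) mod v = (b::nat)"
  by (simp add: mod_add_right_eq)

lemma cyclic_row_pair_surj:
  assumes "s < v" "i \<le> 3" "a < v" "b < v"
  shows "\<exists>x<v. \<exists>y<v. cyclic_row v s x y ! i = a \<and> cyclic_row v s x y ! Suc i = b"
proof -
  let ?sub = "\<lambda>c. (c + v - s) mod v"
  have sub_less: "?sub c < v" for c using assms by simp
  consider "i = 0" | "i = 1" | "i = 2" | "i = 3" using assms(2) by linarith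
  then show ?thesis
  proof cases
    case 1
    then show ?thesis using assms by (auto simp: cyclic_row_def)
  next
    case 2
    then show ?thesis using assms sub_less add_mod_eq_sub[of s v b]
      by (intro exI[of _ "?sub b"] conjI exI[of _ a]) (auto simp: cyclic_row_def)
  next
    case 3
    then show ?thesis using assms sub_less add_mod_eq_sub[of s v a] add_mod_eq_sub[of s v b]
      by (intro exI[of _ "?sub a"] conjI exI[of _ "?sub b"]) (auto simp: cyclic_row_def)
  next
    case 4
    then show ?thesis using assms sub_less add_mod_eq_sub[of s v a]
      by (intro exI[of _ b] conjI exI[of _ "?sub a"]) (auto simp: cyclic_row_def)
  qed
qed

lemma add_mod_cancel:
  assumes "(p + q) mod v = (p' + q) mod v" "p < v" "p' < (v::nat)"
  shows "p = p'"
  using assms cong_add_rcancel_nat[of p q p' v] by (simp add: cong_def)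

lemma shifted_coords_eq:
  fixes s s' x x' y y' v :: nat
  assumes bounds: "s < v" "s' < v" "x < v" "x' < v" "y < v" "y' < v"
    and shift: "x = x' \<and> (s + x) mod v = (s' + x') mod v \<or> y = y' \<and> (s + y) mod v = (s' + y') mod v"
    and x: "x = x' \<or> (s + x) mod v = (s' + x') mod v"
    and y: "y = y' \<or> (s + y) mod v = (s' + y') mod v"
  shows "s = s' \<and> x = x' \<and> y = y'"
proof -
  have "s = s'"
    using shift add_mod_cancel[of s x v s'] add_mod_cancel[of s y v s'] bounds by blast
  moreover have "x = x'"
    using x \<open>s = s'\<close> add_mod_cancel[of x s v x'] bounds by (metis add.commute)
  moreover have "y = y'"
    using y \<open>s = s'\<close> add_mod_cancel[of y s v y'] bounds by (metis add.commute)
  ultimately show ?thesis by blast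
qed

lemma cyclic_row_two_pairs_inj:
  assumes "s < v" "s' < v" "x < v" "x' < v" "y < v" "y' < v" "i \<le> 3" "i' \<le> 3" "i \<noteq> i'"
    and "\<forall>c\<in>{i, Suc i, i', Suc i'}. cyclic_row v s x y ! c = cyclic_row v s' x' y' ! c"
  shows "s = s' \<and> x = x' \<and> y = y'"
proof (rule shifted_coords_eq[OF assms(1-6)])
  let ?S = "{i, Suc i, i', Suc i'}"
  have positions: "(0 \<in> ?S \<or> 4 \<in> ?S) \<and> 1 \<in> ?S \<and> (2 \<in> ?S \<or> 3 \<in> ?S)
      \<or> (0 \<in> ?S \<or> 4 \<in> ?S) \<and> 2 \<in> ?S \<and> 3 \<in> ?S \<or> 1 \<in> ?S \<and> 2 \<in> ?S \<and> 3 \<in> ?S"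
    using assms(7-9) unfolding insert_iff empty_iff by presburger
  have agree: "c \<in> ?S \<Longrightarrow> cyclic_row v s x y ! c = cyclic_row v s' x' y' ! c" for c
    using assms(10) by blast
  have entries: "0 \<in> ?S \<or> 4 \<in> ?S \<Longrightarrow> x = x'" "1 \<in> ?S \<Longrightarrow> y = y'"
    "2 \<in> ?S \<Longrightarrow> (s + x) mod v = (s' + x') mod v" "3 \<in> ?S \<Longrightarrow> (s + y) mod v = (s' + y') mod v"
    using agree[of 0] agree[of 1] agree[of 2] agree[of 3] agree[of 4]
    by (auto simp: cyclic_row_def numeral_eq_Suc)
  show "x = x' \<and> (s + x) mod v = (s' + x') mod v \<or> y = y' \<and> (s + y) mod v = (s' + y') mod v"
    "x = x' \<or> (s + x) mod v = (s' + x') mod v" "y = y' \<or> (s + y) mod v = (s' + y') mod v"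
    using positions entries by meson+
qed

context
  fixes v d N :: nat
  assumes d_less_v: "d < v"
  defines "N \<equiv> (d + 1) * v\<^sup>2"
begin

lemma cyclic_array_is_array: "is_array (cyclic_array v) N 5 v"
  unfolding is_array_def cyclic_array_def
proof (intro allI impI)
  fix r c :: nat assume "c < 5"
  have "0 < v" using d_less_v by simp
  then have "\<forall>z\<in>set (cyclic_row v (layer v r) (xcoord v r) (ycoord v r)). z < v"
    by (simp add: cyclic_row_def xcoord_def ycoord_def)
  moreover have "c < length (cyclic_row v (layer v r) (xcoord v r) (ycoord v r))"
    using \<open>c < 5\<close> by (simp add: cyclic_row_def)
  ultimately show "cyclic_row v (layer v r) (xcoord v r) (ycoord v r) ! c < v"
    using nth_mem by blast
qed

lemma cyclic_array_covers_in_layer: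
  assumes "T \<in> cons_interactions 5 2 v" "s \<le> d"
  shows "\<exists>r\<in>rho (cyclic_array v) N T. layer v r = s"
proof -
  obtain i a b where T: "T = (i, [a, b])" "i \<le> 3" "a < v" "b < v"
    using assms(1) unfolding cons_interactions_2 by auto
  obtain x y where xy: "x < v" "y < v"
    "cyclic_row v s x y ! i = a" "cyclic_row v s x y ! Suc i = b"
    using cyclic_row_pair_surj[OF _ T(2-4), of s] assms(2) d_less_v by auto
  have "row_index v s x y \<in> rho (cyclic_array v) N T"
    using xy row_index_less[OF _ xy(1,2), of s "d + 1"] assms(2)
    by (simp add: T(1) N_def rho_pair cyclic_array_def coords_row_index[OF xy(1,2)])
  then show ?thesis using coords_row_index(1)[OF xy(1,2)] by blast
qed

lemma cyclic_array_card_rho: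
  assumes "T \<in> cons_interactions 5 2 v"
  shows "d + 1 \<le> card (rho (cyclic_array v) N T)"
proof -
  have "{0..d} \<subseteq> layer v ` rho (cyclic_array v) N T"
    using cyclic_array_covers_in_layer[OF assms] by fastforce
  then have "card {0..d} \<le> card (layer v ` rho (cyclic_array v) N T)"
    by (intro card_mono finite_imageI finite_rho)
  also have "\<dots> \<le> card (rho (cyclic_array v) N T)" by (rule card_image_le[OF finite_rho])
  finally show ?thesis by simp
qed

lemma cyclic_array_rho_inter:
  assumes "T \<in> cons_interactions 5 2 v" "T' \<in> cons_interactions 5 2 v" "T \<noteq> T'"
  shows "card (rho (cyclic_array v) N T \<inter> rho (cyclic_array v) N T') \<le> 1"
proof -
  obtain i a b where T: "T = (i, [a, b])" "i \<le> 3"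
    using assms(1) unfolding cons_interactions_2 by auto
  obtain i' a' b' where T': "T' = (i', [a', b'])" "i' \<le> 3"
    using assms(2) unfolding cons_interactions_2 by auto
  have "r = r'"
    if "r \<in> rho (cyclic_array v) N T \<inter> rho (cyclic_array v) N T'"
       "r' \<in> rho (cyclic_array v) N T \<inter> rho (cyclic_array v) N T'" for r r'
  proof -
    have rows: "r < (d + 1) * v\<^sup>2" "r' < (d + 1) * v\<^sup>2"
      and agree: "\<forall>c\<in>{i, Suc i, i', Suc i'}. cyclic_array v r c = cyclic_array v r' c"
      and "i \<noteq> i'"
      using that assms(3) by (auto simp: T(1) T'(1) N_def rho_pair)
    have "0 < v" using d_less_v by simp
    have "layer v r = layer v r' \<and> xcoord v r = xcoord v r' \<and> ycoord v r = ycoord v r'"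
    proof (rule cyclic_row_two_pairs_inj)
      show "layer v r < v" "layer v r' < v" "xcoord v r < v" "xcoord v r' < v"
        "ycoord v r < v" "ycoord v r' < v"
        using coords_less[OF \<open>0 < v\<close> rows(1)] coords_less[OF \<open>0 < v\<close> rows(2)] d_less_v
        by auto
    qed (fact T(2) T'(2) \<open>i \<noteq> i'\<close> agree[unfolded cyclic_array_def])+
    then show "r = r'" using row_index_coords[of v r] row_index_coords[of v r'] by argo
  qed
  then show ?thesis
    unfolding One_nat_def card_le_Suc0_iff_eq[OF finite_Int[OF disjI1[OF finite_rho]]] by blast
qed

lemma cyclic_array_is_optimum_CDA: "is_optimum_CDA d 2 (cyclic_array v) N 5 v"
  unfolding is_optimum_CDA_def is_CDA_def
proof (intro conjI ballI allI impI)
  show "is_array (cyclic_array v) N 5 v" by (rule cyclic_array_is_array)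
next
  fix T assume "T \<in> cons_interactions 5 2 v"
  then show "rho (cyclic_array v) N T \<noteq> {}"
    using cyclic_array_covers_in_layer[of T 0] by auto
next
  fix TT T
  assume "TT \<subseteq> cons_interactions 5 2 v" "card TT = d" "T \<in> cons_interactions 5 2 v"
  moreover have "finite TT"
    using \<open>TT \<subseteq> cons_interactions 5 2 v\<close> finite_cons_interactions by (rule finite_subset)
  moreover have "\<forall>T\<in>cons_interactions 5 2 v. d + 1 \<le> card (rho (cyclic_array v) N T)"
    using cyclic_array_card_rho by blast
  moreover have "\<forall>T\<in>cons_interactions 5 2 v. \<forall>T'\<in>cons_interactions 5 2 v. T \<noteq> T' \<longrightarrow>
      card (rho (cyclic_array v) N T \<inter> rho (cyclic_array v) N T') \<le> 1"
    using cyclic_array_rho_inter by blast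
  ultimately show "rho (cyclic_array v) N T \<subseteq> rho_set (cyclic_array v) N TT \<longleftrightarrow> T \<in> TT"
    by (intro rho_subset_rho_set_iff_mem)
qed (simp add: N_def)

end

theorem mainTheorem17:
  fixes v d :: nat
  assumes "v \<ge> 4" and "v mod 4 \<noteq> 2" and "d \<ge> 1" and "d + 1 \<le> v"
  shows "\<exists>A. is_optimum_CDA d 2 A ((d + 1) * v ^ 2) 5 v"
proof -
  have "d < v" using assms(4) by simp
  then show ?thesis using cyclic_array_is_optimum_CDA by blast
qed

end
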